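(* Let $\varepsilon_n\downarrow0$. For each $n$ let $\mu_n$ be a QSD for $p^{\varepsilon_n}$ with eigenvalue $\lambda_n$. Suppose $\mu_n\to\mu$ weakly as Borel probability measures on $M$. Then: (a) $\liminf_{n}\lambda_n\ge\mu(M_1)$. In particular, if $\mu(M_1)=1$ then $\lambda_n\to1$, and if $\lambda_n\to0$ then $\mu(M_0)=1$. (b) Suppose there is an attractor $A\subset M_1$ such that $\mu_n(U)>0$ for every $n$ and every open neighborhood $U$ of $A$. Then there exists $\delta>0$ such that $\lambda_n\ge1-\beta_\delta(\varepsilon_n)$ for all $n$. (b') Suppose, in addition to the assumption of (b) with $\delta$ as in its conclusion, that some open neighborhood $V_0$ of $M_0$ satisfies $\lim_{n\to\infty}\beta_\delta(\varepsilon_n)/\inf_{x\in V_0}p^{\varepsilon_n}(x,M_0)=0$. Then $\mu(V_0)=0$.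
   Context: Setting. Let $M\subset\mathbb{R}^d$ be closed; all topological notions are relative to $M$. Let $F:M\to M$ be continuous with $\|F\|:=\sup_{x\in M}\|F(x)\|<\infty$. For $A\subset M$ and $\delta>0$, put $N^\delta(A)=\{x\in M:\inf_{y\in A}\|x-y\|<\delta\}$. Let $\{X^\varepsilon\}_{\varepsilon>0}$ be a family of time-homogeneous Markov chains on $M$ with transition kernels $p^\varepsilon(x,\Gamma)$. The following standing hypotheses are assumed. (SH1) For every $\delta>0$, $\beta_\delta(\varepsilon):=\sup_{x\in M}p^\varepsilon(x,M\setminus N^\delta(F(x)))\to0$ as $\varepsilon\to0$. (SH2) $M=M_0\cup M_1$ (disjoint), where $M_0$ is closed, $F(M_0)\subseteq M_0$, $F(M_1)\subseteq M_1$, and $p^\varepsilon(x,M_1)=0$ for all $\varepsilon>0$ and $x\in M_0$. QSD. A Borel probability measure $\mu_\varepsilon$ on $M_1$ is a quasi-stationary distribution (QSD) for $p^\varepsilon$ if there is $\lambda_\varepsilon\in(0,1)$ with $\int_{M_1}p^\varepsilon(x,\Gamma)\,\mu_\varepsilon(dx)=\lambda_\varepsilon\mu_\varepsilon(\Gamma)$ for all Borel $\Gamma\subset M_1$. The number $\lambda_\varepsilon$ is its eigenvalue. Attractor. A compact set $A$ is an attractor for $F$ if there is an open neighborhood $U$ of $A$ with $\bigcap_{n\ge1}F^n(U)=A$ and such that for every open $V\supset A$ there is $n(V)$ with $F^n(U)\subset V$ for all $n\ge n(V)$. *)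

theory Defs
  imports "HOL-Probability.Probability"
begin

definition nbhd :: "'a::metric_space set \<Rightarrow> real \<Rightarrow> 'a set \<Rightarrow> 'a set" where
  "nbhd M \<delta> A = {x \<in> M. \<exists>y\<in>A. dist x y < \<delta>}"

text \<open>beta_delta(eps) = sup over x in M of p^eps(x, M minus N^delta(F x)).
  The kernel family is K :: real => 'a => 'a measure, p^eps(x,G) = measure (K eps x) G.\<close>
definition beta :: "'a::metric_space set \<Rightarrow> ('a \<Rightarrow> 'a) \<Rightarrow> (real \<Rightarrow> 'a \<Rightarrow> 'a measure)
    \<Rightarrow> real \<Rightarrow> real \<Rightarrow> real" where
  "beta M F K \<delta> \<epsilon> = (SUP x\<in>M. measure (K \<epsilon> x) (M - nbhd M \<delta> {F x}))"

definition QSD :: "'a::topological_space set \<Rightarrow> 'a set \<Rightarrow> ('a \<Rightarrow> 'a measure) \<Rightarrow> 'a measure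
    \<Rightarrow> real \<Rightarrow> bool" where
  "QSD M M1 P \<mu> lam \<longleftrightarrow>
     prob_space \<mu> \<and> sets \<mu> = sets (restrict_space borel M) \<and> measure \<mu> M1 = 1 \<and>
     0 < lam \<and> lam < 1 \<and>
     (\<forall>\<Gamma> \<in> sets (restrict_space borel M). \<Gamma> \<subseteq> M1 \<longrightarrow>
        (LINT x:M1|\<mu>. measure (P x) \<Gamma>) = lam * measure \<mu> \<Gamma>)"

definition weak_conv_on :: "'a::topological_space set \<Rightarrow> (nat \<Rightarrow> 'a measure) \<Rightarrow> 'a measure \<Rightarrow> bool" where
  "weak_conv_on M \<mu>s \<mu> \<longleftrightarrow>
     (\<forall>f::'a \<Rightarrow> real. continuous_on M f \<and> bounded (f ` M) \<longrightarrow>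
        (\<lambda>n. integral\<^sup>L (\<mu>s n) f) \<longlonglongrightarrow> integral\<^sup>L \<mu> f)"

definition attractor :: "'a::metric_space set \<Rightarrow> ('a \<Rightarrow> 'a) \<Rightarrow> 'a set \<Rightarrow> bool" where
  "attractor M F A \<longleftrightarrow> compact A \<and> A \<subseteq> M \<and>
     (\<exists>U. openin (top_of_set M) U \<and> A \<subseteq> U \<and>
          (\<Inter>n\<in>{1..}. (F ^^ n) ` U) = A \<and>
          (\<forall>V. openin (top_of_set M) V \<and> A \<subseteq> V \<longrightarrow>
               (\<exists>N. \<forall>n\<ge>N. (F ^^ n) ` U \<subseteq> V)))"

end

theory Submission
  imports Defs
begin

text \<open>
  Every estimate comes from integrating the QSD equation
  \<open>\<integral>\<^sub>M\<^sub>1 p(x,\<Gamma>) d\<mu>\<^sub>n = \<lambda>\<^sub>n \<mu>\<^sub>n(\<Gamma>)\<close> against the bound \<open>p(x, N\<^sup>\<delta>(F x)) \<ge> 1 - \<beta>\<^sub>\<delta>\<close>.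
  (a) Points whose image is farther than r from M0 ("escape sets") jump into M1 with probability
      at least \<open>1 - \<beta>\<^sub>r\<close>; the escape sets are open and exhaust M1, so the portmanteau inequality
      for open sets yields \<open>liminf \<lambda>\<^sub>n \<ge> \<mu>(M1)\<close>.
  (b) An attractor inside M1 has a trapping region W: the set of points reachable from a small
      neighbourhood of A by \<eta>-pseudo-orbits, which stays in M1 by finite-time shadowing. Taking
      \<open>\<Gamma> = W\<close> in the QSD equation gives \<open>\<lambda>\<^sub>n \<ge> 1 - \<beta>\<^sub>\<eta>\<close>.
  (b') Taking \<open>\<Gamma> = M1\<close> shows that the absorption probability on V0 times \<open>\<mu>\<^sub>n(V0)\<close> is at most
      \<open>1 - \<lambda>\<^sub>n \<le> \<beta>\<close>; the ratio hypothesis and the portmanteau inequality give \<open>\<mu>(V0) = 0\<close>.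
\<close>

lemma openin_sets_restrict_borel:
  "openin (top_of_set M) S \<Longrightarrow> S \<in> sets (restrict_space borel M)"
  by (auto simp: openin_open sets_restrict_space)

lemma set_integral_lower:
  fixes \<nu> :: "'a measure" and g :: "'a \<Rightarrow> real"
  assumes fm: "finite_measure \<nu>" and gm: "g \<in> borel_measurable \<nu>"
    and gb: "\<And>x. x \<in> space \<nu> \<Longrightarrow> 0 \<le> g x \<and> g x \<le> 1"
    and T: "T \<in> sets \<nu>" and S: "S \<in> sets \<nu>" and ST: "S \<subseteq> T"
    and c: "\<And>x. x \<in> S \<Longrightarrow> c \<le> g x"
  shows "c * measure \<nu> S \<le> (LINT x:T|\<nu>. g x)"
proof -
  interpret finite_measure \<nu> by (rule fm)
  have i1: "integrable \<nu> (\<lambda>x. indicator S x * c)"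
    using S by (intro integrable_const_bound[where B="\<bar>c\<bar>"]) (auto simp: indicator_def)
  have i2: "integrable \<nu> (\<lambda>x. indicator T x *\<^sub>R g x)"
    using T gm gb by (intro integrable_const_bound[where B=1]) (auto simp: indicator_def)
  have "c * measure \<nu> S = (\<integral>x. indicator S x * c \<partial>\<nu>)"
    using sets.sets_into_space[OF S] by (simp add: Int_absorb2)
  also have "\<dots> \<le> (\<integral>x. indicator T x *\<^sub>R g x \<partial>\<nu>)"
    using c gb ST by (intro integral_mono[OF i1 i2]) (auto simp: indicator_def)
  finally show ?thesis by (simp add: set_lebesgue_integral_def)
qed

lemma set_integral_upper:
  fixes \<nu> :: "'a measure" and g :: "'a \<Rightarrow> real"
  assumes fm: "finite_measure \<nu>" and gm: "g \<in> borel_measurable \<nu>"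
    and gb: "\<And>x. x \<in> space \<nu> \<Longrightarrow> 0 \<le> g x \<and> g x \<le> 1"
    and T: "T \<in> sets \<nu>" and S: "S \<in> sets \<nu>" and ST: "S \<subseteq> T"
    and c: "\<And>x. x \<in> S \<Longrightarrow> g x \<le> c"
  shows "(LINT x:T|\<nu>. g x) \<le> measure \<nu> T - (1 - c) * measure \<nu> S"
proof -
  interpret finite_measure \<nu> by (rule fm)
  have iT: "integrable \<nu> (indicator T :: _ \<Rightarrow> real)" and iS: "integrable \<nu> (indicator S :: _ \<Rightarrow> real)"
    using T S by (auto simp: less_top[symmetric])
  have i1: "integrable \<nu> (\<lambda>x. indicator T x - (1 - c) * indicator S x)"
    using iT iS by auto
  have i2: "integrable \<nu> (\<lambda>x. indicator T x *\<^sub>R g x)"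
    using T gm gb by (intro integrable_const_bound[where B=1]) (auto simp: indicator_def)
  have "(\<integral>x. indicator T x *\<^sub>R g x \<partial>\<nu>) \<le> (\<integral>x. indicator T x - (1 - c) * indicator S x \<partial>\<nu>)"
    using c gb ST by (intro integral_mono[OF i2 i1]) (auto simp: indicator_def)
  also have "\<dots> = measure \<nu> T - (1 - c) * measure \<nu> S"
    using iT iS sets.sets_into_space[OF S] sets.sets_into_space[OF T] by (simp add: Int_absorb2)
  finally show ?thesis by (simp add: set_lebesgue_integral_def)
qed

lemma continuous_approx_indicator_openin:
  fixes M :: "'a::metric_space set"
  assumes Mc: "closed M" and G: "openin (top_of_set M) G" and MG: "M - G \<noteq> {}"
  obtains f :: "nat \<Rightarrow> 'a \<Rightarrow> real"
  where "\<And>k. continuous_on UNIV (f k)" "\<And>k x. 0 \<le> f k x \<and> f k x \<le> 1"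
    "\<And>k x. x \<in> M \<Longrightarrow> f k x \<le> indicator G x"
    "\<And>x. x \<in> M \<Longrightarrow> (\<lambda>k. f k x) \<longlonglongrightarrow> indicator G x"
proof
  define D where "D = M - G"
  obtain Og where "open Og" "G = M \<inter> Og" using G by (auto simp: openin_open)
  then have "D = M \<inter> - Og" by (auto simp: D_def)
  then have Dc: "closed D" using Mc \<open>open Og\<close> by (simp add: closed_Int open_closed)
  define f where "f k x = min 1 (real k * infdist x D)" for k :: nat and x
  show "continuous_on UNIV (f k)" for k
    unfolding f_def by (intro continuous_intros)
  show fb: "0 \<le> f k x \<and> f k x \<le> 1" for k x
    unfolding f_def by (auto simp: infdist_nonneg)
  show "f k x \<le> indicator G x" if "x \<in> M" for k x
    using fb[of k x] that by (cases "x \<in> G") (auto simp: f_def D_def)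
  show "(\<lambda>k. f k x) \<longlonglongrightarrow> indicator G x" if x: "x \<in> M" for x
  proof (cases "x \<in> G")
    case True
    then have pos: "infdist x D > 0"
      using infdist_pos_not_in_closed[OF Dc] MG by (auto simp: D_def)
    obtain N :: nat where N: "1 / infdist x D < N" using reals_Archimedean2 by blast
    have "f k x = 1" if "N \<le> k" for k
    proof -
      have "1 / infdist x D < real k" using N that by linarith
      then show ?thesis using pos by (simp add: f_def field_simps)
    qed
    then have "eventually (\<lambda>k. f k x = 1) sequentially"
      unfolding eventually_sequentially by blast
    then show ?thesis using True by (simp add: tendsto_eventually)
  next
    case False then show ?thesis using x by (simp add: f_def D_def)
  qed
qed

lemma integral_le_measure:
  fixes f :: "'a \<Rightarrow> real"
  assumes "prob_space \<nu>" "G \<in> sets \<nu>" "f \<in> borel_measurable \<nu>"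
    and "\<And>x. x \<in> space \<nu> \<Longrightarrow> 0 \<le> f x \<and> f x \<le> indicator G x"
  shows "integral\<^sup>L \<nu> f \<le> measure \<nu> G"
proof -
  interpret prob_space \<nu> by (rule assms(1))
  have "integral\<^sup>L \<nu> f \<le> integral\<^sup>L \<nu> (indicator G)"
  proof (rule integral_mono)
    have "norm (f x) \<le> 1" if "x \<in> space \<nu>" for x
      using assms(4)[OF that] by (cases "x \<in> G") auto
    then show "integrable \<nu> f"
      by (intro integrable_const_bound[where B=1] AE_I2 assms(3))
    show "integrable \<nu> (indicator G :: _ \<Rightarrow> real)"
      using assms(2) by (auto simp: less_top[symmetric])
  qed (use assms(4) in auto)
  also have "\<dots> = measure \<nu> G" using assms(2) by simp
  finally show ?thesis .
qed

lemma weak_conv_openin_lower: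
  fixes M :: "'a::metric_space set"
  assumes Mc: "closed M" and weak: "weak_conv_on M \<mu>s \<mu>"
    and ps: "\<And>n. prob_space (\<mu>s n)" and ss: "\<And>n. sets (\<mu>s n) = sets (restrict_space borel M)"
    and p: "prob_space \<mu>" and s: "sets \<mu> = sets (restrict_space borel M)"
    and G: "openin (top_of_set M) G" and e: "e > 0"
  shows "eventually (\<lambda>n. measure \<mu> G - e < measure (\<mu>s n) G) sequentially"
proof -
  have space_n: "space (\<mu>s n) = M" for n
    using sets_eq_imp_space_eq[OF ss[of n]] by (simp add: space_restrict_space)
  have space: "space \<mu> = M"
    using sets_eq_imp_space_eq[OF s] by (simp add: space_restrict_space)
  have G_sets: "G \<in> sets (restrict_space borel M)" by (rule openin_sets_restrict_borel[OF G])
  show ?thesis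
  proof (cases "M - G = {}")
    case True
    then have "G = M" using openin_imp_subset[OF G] by auto
    then have "measure (\<mu>s n) G = 1" "measure \<mu> G = 1" for n
      using prob_space.prob_space[OF ps[of n]] prob_space.prob_space[OF p] space_n space by auto
    then show ?thesis using e by auto
  next
    case False
    obtain f :: "nat \<Rightarrow> 'a \<Rightarrow> real" where f_cont: "\<And>k. continuous_on UNIV (f k)"
      and f_unit: "\<And>k x. 0 \<le> f k x \<and> f k x \<le> 1" and f_le: "\<And>k x. x \<in> M \<Longrightarrow> f k x \<le> indicator G x"
      and f_lim: "\<And>x. x \<in> M \<Longrightarrow> (\<lambda>k. f k x) \<longlonglongrightarrow> indicator G x"
      using continuous_approx_indicator_openin[OF Mc G False] by blast
    have f_meas: "f k \<in> borel_measurable (restrict_space borel M)" for k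
      by (intro measurable_restrict_space1 borel_measurable_continuous_onI f_cont)
    have "(\<lambda>k. integral\<^sup>L \<mu> (f k)) \<longlonglongrightarrow> integral\<^sup>L \<mu> (indicator G)"
    proof (rule integral_dominated_convergence[where w="\<lambda>_. 1"])
      show "indicator G \<in> borel_measurable \<mu>" "f k \<in> borel_measurable \<mu>" for k
        using G_sets f_meas by (simp_all add: measurable_cong_sets[OF s refl])
      show "integrable \<mu> (\<lambda>_. 1)"
        using prob_space.finite_measure[OF p] by (rule finite_measure.integrable_const)
    qed (use f_lim f_unit space in auto)
    moreover have "integral\<^sup>L \<mu> (indicator G) = measure \<mu> G"
      using space openin_imp_subset[OF G] by (simp add: Int_absorb2)
    ultimately have "eventually (\<lambda>k. measure \<mu> G - e/2 < integral\<^sup>L \<mu> (f k)) sequentially"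
      using e by (intro order_tendstoD(1)) auto
    then obtain k where k: "measure \<mu> G - e/2 < integral\<^sup>L \<mu> (f k)"
      using eventually_sequentially by auto
    have "continuous_on M (f k)" "bounded (f k ` M)"
      using f_cont f_unit continuous_on_subset by (blast, intro boundedI[where B=1], auto)
    then have "(\<lambda>n. integral\<^sup>L (\<mu>s n) (f k)) \<longlonglongrightarrow> integral\<^sup>L \<mu> (f k)"
      using weak unfolding weak_conv_on_def by blast
    then have ev: "eventually (\<lambda>n. integral\<^sup>L \<mu> (f k) - e/2 < integral\<^sup>L (\<mu>s n) (f k)) sequentially"
      using e by (intro order_tendstoD(1)) auto
    have le: "integral\<^sup>L (\<mu>s n) (f k) \<le> measure (\<mu>s n) G" for n
      using G_sets f_meas f_unit f_le space_n
      by (intro integral_le_measure[OF ps]) (auto simp: ss measurable_cong_sets[OF ss refl])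
    show ?thesis
      using ev
    proof eventually_elim
      case (elim n)
      then show ?case using k le[of n] by linarith
    qed
  qed
qed

definition pseudo_orbit :: "'a::metric_space set \<Rightarrow> ('a \<Rightarrow> 'a) \<Rightarrow> real \<Rightarrow> nat \<Rightarrow> (nat \<Rightarrow> 'a) \<Rightarrow> bool" where
  "pseudo_orbit M F \<eta> m x \<longleftrightarrow> (\<forall>i<m. x (Suc i) \<in> M \<and> dist (x (Suc i)) (F (x i)) < \<eta>)"

definition pseudo_orbit_reach :: "'a::metric_space set \<Rightarrow> ('a \<Rightarrow> 'a) \<Rightarrow> real \<Rightarrow> 'a set \<Rightarrow> 'a set" where
  "pseudo_orbit_reach M F \<eta> V = {x m | x m. x 0 \<in> V \<and> pseudo_orbit M F \<eta> m x}"

lemma pseudo_orbit_le: "pseudo_orbit M F \<eta> m x \<Longrightarrow> j \<le> m \<Longrightarrow> pseudo_orbit M F \<eta> j x"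
  by (auto simp: pseudo_orbit_def)

lemma pseudo_orbit_in_space: "x 0 \<in> M \<Longrightarrow> pseudo_orbit M F \<eta> m x \<Longrightarrow> x m \<in> M"
  by (cases m) (auto simp: pseudo_orbit_def)

lemma funpow_image_subset: "F ` S \<subseteq> S \<Longrightarrow> (F ^^ j) ` S \<subseteq> S"
  by (induction j) auto

lemma continuous_on_funpow:
  assumes "continuous_on M F" and "F ` M \<subseteq> M"
  shows "continuous_on M (F ^^ j)"
proof (induction j)
  case 0 then show ?case by simp
next
  case (Suc j)
  have "continuous_on M (F \<circ> (F ^^ j))"
    using Suc funpow_image_subset[OF assms(2), of j]
    by (intro continuous_on_compose continuous_on_subset[OF assms(1)]) auto
  then show ?case by simp
qed

lemma compact_openin_margin:
  assumes "compact C" "openin (top_of_set M) S" "C \<subseteq> S"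
  shows "\<exists>m>0. \<forall>c\<in>C. \<forall>y\<in>M. dist y c < m \<longrightarrow> y \<in> S"
proof -
  obtain Og where Og: "open Og" "S = M \<inter> Og" using assms(2) by (auto simp: openin_open)
  then obtain m where "m > 0" "(\<Union>c\<in>C. ball c m) \<subseteq> Og"
    using compact_subset_open_imp_ball_epsilon_subset[OF assms(1) Og(1)] assms(3) by blast
  then show ?thesis using Og(2) by (force simp: dist_commute)
qed

text \<open>Shadowing by induction on the length, assuming uniform continuity of F near the
  compact set C containing the true orbit; accuracy \<open>\<epsilon> \<le> 1\<close> keeps the chain in that region.\<close>
lemma pseudo_orbit_shadowing_uniform:
  fixes F :: "'a::metric_space \<Rightarrow> 'a"
  assumes uc: "uniformly_continuous_on {x\<in>M. infdist x C \<le> 1} F" and CM: "C \<subseteq> M"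
    and \<epsilon>: "0 < \<epsilon>" "\<epsilon> \<le> 1"
  shows "\<exists>\<eta>>0. \<forall>x. x 0 \<in> M \<longrightarrow> (\<forall>j\<le>k. (F ^^ j) (x 0) \<in> C) \<longrightarrow>
           (\<forall>j\<le>k. pseudo_orbit M F \<eta> j x \<longrightarrow> dist (x j) ((F ^^ j) (x 0)) < \<epsilon>)"
  using \<epsilon>
proof (induction k arbitrary: \<epsilon>)
  case 0
  show ?case using 0 by (intro exI[of _ 1]) auto
next
  case (Suc k)
  define C' where "C' = {x\<in>M. infdist x C \<le> 1}"
  obtain \<rho> where \<rho>: "\<rho> > 0" "\<forall>y\<in>C'. \<forall>z\<in>C'. dist z y < \<rho> \<longrightarrow> dist (F z) (F y) < \<epsilon>/2"
    using uc Suc.prems unfolding uniformly_continuous_on_def C'_def by (meson half_gt_zero)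
  have "0 < min \<rho> \<epsilon>" "min \<rho> \<epsilon> \<le> 1" using \<rho> Suc.prems by auto
  from Suc.IH[OF this] obtain \<eta>' where \<eta>': "\<eta>' > 0"
    "\<And>x j. x 0 \<in> M \<Longrightarrow> \<forall>j\<le>k. (F ^^ j) (x 0) \<in> C \<Longrightarrow> j \<le> k \<Longrightarrow>
       pseudo_orbit M F \<eta>' j x \<Longrightarrow> dist (x j) ((F ^^ j) (x 0)) < min \<rho> \<epsilon>" by blast
  define \<eta> where "\<eta> = min \<eta>' (\<epsilon>/2)"
  show ?case
  proof (intro exI[of _ \<eta>] conjI allI impI)
    show "\<eta> > 0" using \<eta>' Suc.prems by (simp add: \<eta>_def)
    fix x j assume x0: "x 0 \<in> M" and orb: "\<forall>j\<le>Suc k. (F ^^ j) (x 0) \<in> C"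
      and j: "j \<le> Suc k" and po: "pseudo_orbit M F \<eta> j x"
    have close: "dist (x i) ((F ^^ i) (x 0)) < min \<rho> \<epsilon>"
      if "i \<le> k" "pseudo_orbit M F \<eta> i x" for i
      using \<eta>'(2)[of x i, OF x0] orb that by (auto simp: pseudo_orbit_def \<eta>_def)
    show "dist (x j) ((F ^^ j) (x 0)) < \<epsilon>"
    proof (cases "j \<le> k")
      case True then show ?thesis using close[OF True po] by simp
    next
      case False
      then have j: "j = Suc k" using j by simp
      have ck: "(F ^^ k) (x 0) \<in> C" using orb by simp
      have pok: "pseudo_orbit M F \<eta> k x" using po j by (auto simp: pseudo_orbit_def)
      note close = close[OF order_refl pok]
      have xk: "x k \<in> C'"
        using pseudo_orbit_in_space[OF x0 pok] close Suc.prems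
          infdist_le[OF ck, of "x k"] by (auto simp: C'_def)
      have "(F ^^ k) (x 0) \<in> C'" using ck CM by (auto simp: C'_def)
      then have d1: "dist (F (x k)) (F ((F ^^ k) (x 0))) < \<epsilon>/2"
        using \<rho>(2) xk close by auto
      have d2: "dist (x (Suc k)) (F (x k)) < \<epsilon>/2"
        using po j by (auto simp: pseudo_orbit_def \<eta>_def)
      show ?thesis
        using dist_triangle[of "x (Suc k)" "F ((F ^^ k) (x 0))" "F (x k)"] d1 d2 j by simp
    qed
  qed
qed

lemma pseudo_orbit_shadowing:
  fixes F :: "'a::heine_borel \<Rightarrow> 'a"
  assumes Mc: "closed M" and Fc: "continuous_on M F" and C: "compact C" "C \<subseteq> M"
    and \<epsilon>: "\<epsilon> > 0"
  shows "\<exists>\<eta>>0. \<forall>x. x 0 \<in> M \<longrightarrow> (\<forall>j\<le>k. (F ^^ j) (x 0) \<in> C) \<longrightarrow>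
           (\<forall>j\<le>k. pseudo_orbit M F \<eta> j x \<longrightarrow> dist (x j) ((F ^^ j) (x 0)) < \<epsilon>)"
proof (cases "C = {}")
  case True then show ?thesis by (intro exI[of _ 1]) auto
next
  case False
  have "compact (M \<inter> {x. infdist x C \<le> 1})"
    using compact_infdist_le[OF False C(1)] Mc by auto
  then have "uniformly_continuous_on {x\<in>M. infdist x C \<le> 1} F"
    by (intro compact_uniformly_continuous continuous_on_subset[OF Fc]) (auto simp: Int_def)
  from pseudo_orbit_shadowing_uniform[OF this C(2), of "min \<epsilon> 1" k] \<epsilon>
  obtain \<eta> where "\<eta> > 0" "\<forall>x. x 0 \<in> M \<longrightarrow> (\<forall>j\<le>k. (F ^^ j) (x 0) \<in> C) \<longrightarrow>
           (\<forall>j\<le>k. pseudo_orbit M F \<eta> j x \<longrightarrow> dist (x j) ((F ^^ j) (x 0)) < min \<epsilon> 1)"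
    by auto
  then show ?thesis by (intro exI[of _ \<eta>]) auto
qed

lemma pseudo_orbit_recurrence:
  assumes N: "N > 0"
    and stay: "\<And>x j. x 0 \<in> V \<Longrightarrow> j \<le> N \<Longrightarrow> pseudo_orbit M F \<eta> j x \<Longrightarrow> x j \<in> S"
    and return: "\<And>x. x 0 \<in> V \<Longrightarrow> pseudo_orbit M F \<eta> N x \<Longrightarrow> x N \<in> V"
  shows "x 0 \<in> V \<Longrightarrow> pseudo_orbit M F \<eta> m x \<Longrightarrow> x m \<in> S"
proof (induction m arbitrary: x rule: less_induct)
  case (less m)
  show ?case
  proof (cases "m \<le> N")
    case True
    then show ?thesis using stay less.prems by blast
  next
    case False
    have "pseudo_orbit M F \<eta> N x" using less.prems(2) False by (auto simp: pseudo_orbit_def)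
    then have xN: "x N \<in> V" using return less.prems(1) by blast
    have "pseudo_orbit M F \<eta> (m - N) (\<lambda>i. x (i + N))"
      using less.prems(2) False by (auto simp: pseudo_orbit_def)
    moreover have "m - N < m" using N False by simp
    ultimately have "x (m - N + N) \<in> S" using less.IH[of "m - N" "\<lambda>i. x (i + N)"] xN by simp
    then show ?thesis using False by simp
  qed
qed

lemma pseudo_orbit_reach_step:
  assumes "x \<in> pseudo_orbit_reach M F \<eta> V" "y \<in> M" "dist y (F x) < \<eta>"
  shows "y \<in> pseudo_orbit_reach M F \<eta> V"
proof -
  obtain z m where z: "z 0 \<in> V" "pseudo_orbit M F \<eta> m z" "z m = x"
    using assms(1) by (auto simp: pseudo_orbit_reach_def)
  define z' where "z' = z(Suc m := y)"
  have "z' 0 \<in> V" "pseudo_orbit M F \<eta> (Suc m) z'" "z' (Suc m) = y"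
    using z assms(2,3) by (auto simp: pseudo_orbit_def z'_def less_Suc_eq)
  then show ?thesis unfolding pseudo_orbit_reach_def by blast
qed

lemma pseudo_orbit_reach_base: "V \<subseteq> pseudo_orbit_reach M F \<eta> V"
  unfolding pseudo_orbit_reach_def by (force intro: exI[of _ 0] simp: pseudo_orbit_def)

lemma pseudo_orbit_reach_openin:
  assumes V: "openin (top_of_set M) V"
  shows "openin (top_of_set M) (pseudo_orbit_reach M F \<eta> V)"
proof -
  define W where "W = pseudo_orbit_reach M F \<eta> V"
  have VW: "V \<subseteq> W" unfolding W_def by (rule pseudo_orbit_reach_base)
  have "W = V \<union> (\<Union>x\<in>W. M \<inter> ball (F x) \<eta>)"
  proof
    show "W \<subseteq> V \<union> (\<Union>x\<in>W. M \<inter> ball (F x) \<eta>)"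
    proof
      fix y assume "y \<in> W"
      then obtain z m where z: "z 0 \<in> V" "pseudo_orbit M F \<eta> m z" "z m = y"
        by (auto simp: W_def pseudo_orbit_reach_def)
      show "y \<in> V \<union> (\<Union>x\<in>W. M \<inter> ball (F x) \<eta>)"
      proof (cases m)
        case 0 then show ?thesis using z by simp
      next
        case (Suc k)
        have "z k \<in> W"
          using z pseudo_orbit_le[OF z(2), of k] Suc
          unfolding W_def pseudo_orbit_reach_def by auto
        moreover have "y \<in> M \<inter> ball (F (z k)) \<eta>"
          using z Suc by (auto simp: pseudo_orbit_def dist_commute)
        ultimately show ?thesis by blast
      qed
    qed
    show "V \<union> (\<Union>x\<in>W. M \<inter> ball (F x) \<eta>) \<subseteq> W"
      using VW pseudo_orbit_reach_step[of _ M F \<eta> V] by (auto simp: W_def dist_commute)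
  qed
  moreover have "openin (top_of_set M) (V \<union> (\<Union>x\<in>W. M \<inter> ball (F x) \<eta>))"
    using V by (intro openin_Un openin_Union) auto
  ultimately show ?thesis by (simp add: W_def)
qed

lemma attractor_trapping_region:
  fixes M :: "'a::heine_borel set"
  assumes Mc: "closed M" and Fc: "continuous_on M F" and FM: "F ` M \<subseteq> M"
    and M1o: "openin (top_of_set M) M1" and FM1: "F ` M1 \<subseteq> M1"
    and att: "attractor M F A" and AM1: "A \<subseteq> M1"
  shows "\<exists>\<eta>>0. \<exists>W. openin (top_of_set M) W \<and> A \<subseteq> W \<and> W \<subseteq> M1 \<and>
            (\<forall>x\<in>W. \<forall>y\<in>M. dist y (F x) < \<eta> \<longrightarrow> y \<in> W)"
proof (cases "A = {}")
  case True then show ?thesis by (intro exI[of _ 1] conjI exI[of _ "{}"]) auto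
next
  case Ane: False
  obtain U where cA: "compact A" and AM: "A \<subseteq> M" and Uo: "openin (top_of_set M) U"
    and AU: "A \<subseteq> U" and conv: "\<And>V. openin (top_of_set M) V \<Longrightarrow> A \<subseteq> V \<Longrightarrow> \<exists>N. \<forall>n\<ge>N. (F ^^ n) ` U \<subseteq> V"
    using att unfolding attractor_def by metis
  obtain e where e: "e > 0" "\<forall>a\<in>A. \<forall>y\<in>M. dist y a < e \<longrightarrow> y \<in> U \<inter> M1"
    using compact_openin_margin[OF cA openin_Int[OF Uo M1o]] AU AM1 by auto
  define r where "r = e/2"
  have r: "r > 0" using e by (simp add: r_def)
  define K0 where "K0 = {x\<in>M. infdist x A \<le> r}"
  define Vr where "Vr = {x\<in>M. infdist x A < r}"
  have K0_sub: "K0 \<subseteq> U \<inter> M1"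
  proof
    fix x assume x: "x \<in> K0"
    obtain a where "a \<in> A" "infdist x A = dist x a"
      using infdist_attains_inf[OF compact_imp_closed[OF cA] Ane] by blast
    then show "x \<in> U \<inter> M1" using e x by (auto simp: K0_def r_def)
  qed
  have K0c: "compact K0"
    using closed_Int_compact[OF Mc compact_infdist_le[OF Ane cA r]] by (simp add: K0_def Int_def)
  have nbhd_open: "openin (top_of_set M) {x\<in>M. infdist x A < s}" for s
    using continuous_openin_preimage_gen[OF continuous_on_infdist[OF continuous_on_id[of M], of A],
        where T="{..<s}"]
    by (simp add: vimage_def Int_def)
  have A_nbhd: "A \<subseteq> {x\<in>M. infdist x A < s}" if "s > 0" for s
    using AM that by auto
  obtain N0 where N0: "\<forall>n\<ge>N0. (F ^^ n) ` U \<subseteq> {x\<in>M. infdist x A < r/2}"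
    using conv[OF nbhd_open A_nbhd] r by (meson half_gt_zero)
  define N where "N = Suc N0"
  define C where "C = (\<Union>j\<le>N. (F ^^ j) ` K0)"
  have Cc: "compact C" unfolding C_def
    using continuous_on_subset[OF continuous_on_funpow[OF Fc FM]] K0c K0_sub
    by (intro compact_UN compact_continuous_image) (auto simp: K0_def)
  have CM1: "C \<subseteq> M1"
    using K0_sub funpow_image_subset[OF FM1] unfolding C_def by blast
  obtain m0 where m0: "m0 > 0" "\<forall>c\<in>C. \<forall>y\<in>M. dist y c < m0 \<longrightarrow> y \<in> M1"
    using compact_openin_margin[OF Cc M1o CM1] by blast
  have CM: "C \<subseteq> M" using CM1 openin_imp_subset[OF M1o] by blast
  obtain \<eta> where \<eta>: "\<eta> > 0" "\<forall>x. x 0 \<in> M \<longrightarrow> (\<forall>j\<le>N. (F ^^ j) (x 0) \<in> C) \<longrightarrow>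
      (\<forall>j\<le>N. pseudo_orbit M F \<eta> j x \<longrightarrow> dist (x j) ((F ^^ j) (x 0)) < min m0 (r/2))"
    using pseudo_orbit_shadowing[OF Mc Fc Cc CM, of "min m0 (r/2)" N] m0(1) r by auto
  have shadow: "x j \<in> M \<and> (F ^^ j) (x 0) \<in> C \<and> dist (x j) ((F ^^ j) (x 0)) < min m0 (r/2)"
    if "x 0 \<in> Vr" "j \<le> N" "pseudo_orbit M F \<eta> j x" for x j
  proof -
    have "x 0 \<in> M" "x 0 \<in> K0" using that(1) by (auto simp: Vr_def K0_def)
    moreover have "\<forall>i\<le>N. (F ^^ i) (x 0) \<in> C" using \<open>x 0 \<in> K0\<close> by (auto simp: C_def)
    ultimately show ?thesis using \<eta>(2) that pseudo_orbit_in_space by blast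
  qed
  have stays: "x m \<in> M1" if "x 0 \<in> Vr" "pseudo_orbit M F \<eta> m x" for x m
  proof (rule pseudo_orbit_recurrence[of N Vr M F \<eta> M1, OF _ _ _ that])
    show "N > 0" by (simp add: N_def)
    show "x j \<in> M1" if "x 0 \<in> Vr" "j \<le> N" "pseudo_orbit M F \<eta> j x" for x j
      using shadow[OF that] m0(2) by auto
    show "x N \<in> Vr" if x0: "x 0 \<in> Vr" and po: "pseudo_orbit M F \<eta> N x" for x
    proof -
      have "x 0 \<in> U" using x0 K0_sub by (auto simp: Vr_def K0_def)
      moreover have "N \<ge> N0" by (simp add: N_def)
      ultimately have "infdist ((F ^^ N) (x 0)) A < r/2" using N0 by blast
      moreover have "infdist (x N) A \<le> infdist ((F ^^ N) (x 0)) A + dist (x N) ((F ^^ N) (x 0))"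
        by (rule infdist_triangle)
      ultimately show ?thesis using shadow[OF x0 order_refl po] by (auto simp: Vr_def)
    qed
  qed
  define W where "W = pseudo_orbit_reach M F \<eta> Vr"
  have "openin (top_of_set M) W" unfolding W_def Vr_def by (rule pseudo_orbit_reach_openin[OF nbhd_open])
  moreover have "A \<subseteq> W" using A_nbhd[OF r] pseudo_orbit_reach_base by (fastforce simp: W_def Vr_def)
  moreover have "W \<subseteq> M1" using stays by (auto simp: W_def pseudo_orbit_reach_def)
  moreover have "\<forall>x\<in>W. \<forall>y\<in>M. dist y (F x) < \<eta> \<longrightarrow> y \<in> W"
    using pseudo_orbit_reach_step by (auto simp: W_def)
  ultimately show ?thesis using \<eta>(1) by blast
qed

definition escape_set :: "'a::metric_space set \<Rightarrow> ('a \<Rightarrow> 'a) \<Rightarrow> 'a set \<Rightarrow> real \<Rightarrow> 'a set" where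
  "escape_set M F M0 r = {x\<in>M. r < infdist (F x) M0}"

lemma escape_set_openin:
  assumes "continuous_on M F"
  shows "openin (top_of_set M) (escape_set M F M0 r)"
  using continuous_openin_preimage_gen[OF continuous_on_infdist[OF assms, of M0], where T="{r<..}"]
  by (simp add: escape_set_def vimage_def Int_def)

lemma escape_set_nbhd: "x \<in> escape_set M F M0 r \<Longrightarrow> nbhd M r {F x} \<subseteq> M - M0"
  using infdist_le[of _ M0 "F x"] by (fastforce simp: escape_set_def nbhd_def dist_commute)

lemma escape_set_subset:
  assumes "F ` M0 \<subseteq> M0" "0 \<le> r"
  shows "escape_set M F M0 r \<subseteq> M - M0"
  using assms by (auto simp: escape_set_def)

lemma escape_set_exhaust:
  assumes "closed M0" "M0 \<noteq> {}" "F ` (M - M0) \<subseteq> M - M0"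
  shows "M - M0 \<subseteq> (\<Union>k. escape_set M F M0 (1 / Suc k))"
proof
  fix x assume x: "x \<in> M - M0"
  then have "0 < infdist (F x) M0" using assms by (intro infdist_pos_not_in_closed) auto
  then obtain n :: nat where "n > 0" "inverse n < infdist (F x) M0"
    using ex_inverse_of_nat_less by blast
  then have "1 / Suc (n - 1) < infdist (F x) M0" by (simp add: inverse_eq_divide)
  then show "x \<in> (\<Union>k. escape_set M F M0 (1 / Suc k))"
    using x by (auto simp: escape_set_def inverse_eq_divide)
qed

locale qsd_limit =
  fixes M M0 M1 :: "'a::heine_borel set" and F :: "'a \<Rightarrow> 'a"
    and K :: "real \<Rightarrow> 'a \<Rightarrow> 'a measure" and eps lam :: "nat \<Rightarrow> real"
    and \<mu>s :: "nat \<Rightarrow> 'a measure" and \<mu> :: "'a measure"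
  assumes M_closed: "closed M" and F_cont: "continuous_on M F" and F_maps: "F ` M \<subseteq> M"
    and K_prob: "\<And>\<epsilon> x. \<epsilon> > 0 \<Longrightarrow> x \<in> M \<Longrightarrow>
                    prob_space (K \<epsilon> x) \<and> sets (K \<epsilon> x) = sets (restrict_space borel M)"
    and K_meas: "\<And>\<epsilon> \<Gamma>. \<epsilon> > 0 \<Longrightarrow> \<Gamma> \<in> sets (restrict_space borel M) \<Longrightarrow>
                    (\<lambda>x. measure (K \<epsilon> x) \<Gamma>) \<in> borel_measurable (restrict_space borel M)"
    and SH1: "\<And>\<delta>. \<delta> > 0 \<Longrightarrow> ((\<lambda>\<epsilon>. beta M F K \<delta> \<epsilon>) \<longlongrightarrow> 0) (at_right 0)"
    and M0_sub: "M0 \<subseteq> M" and M0_closed: "closed M0" and M1_eq: "M1 = M - M0"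
    and F_M0: "F ` M0 \<subseteq> M0" and F_M1: "F ` M1 \<subseteq> M1"
    and eps_pos: "\<And>n. eps n > 0" and eps_lim: "eps \<longlonglongrightarrow> 0"
    and qsd: "\<And>n. QSD M M1 (K (eps n)) (\<mu>s n) (lam n)"
    and mu_prob: "prob_space \<mu>" and mu_sets: "sets \<mu> = sets (restrict_space borel M)"
    and weak: "weak_conv_on M \<mu>s \<mu>"
begin

abbreviation "Borel_M \<equiv> restrict_space borel M"

lemma mus_prob: "prob_space (\<mu>s n)" and mus_sets: "sets (\<mu>s n) = sets Borel_M"
  and mus_M1: "measure (\<mu>s n) M1 = 1" and lam_less_1: "lam n < 1"
  using qsd[of n] by (auto simp: QSD_def)

lemma qsd_eq: "\<Gamma> \<in> sets Borel_M \<Longrightarrow> \<Gamma> \<subseteq> M1 \<Longrightarrow>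
    (LINT x:M1|\<mu>s n. measure (K (eps n) x) \<Gamma>) = lam n * measure (\<mu>s n) \<Gamma>"
  using qsd[of n] by (auto simp: QSD_def)

lemma mus_space: "space (\<mu>s n) = M"
  using sets_eq_imp_space_eq[OF mus_sets[of n]] by (simp add: space_restrict_space)

lemma kernel_prob: "x \<in> M \<Longrightarrow> prob_space (K (eps n) x)"
  and kernel_sets: "x \<in> M \<Longrightarrow> sets (K (eps n) x) = sets Borel_M"
  using K_prob[OF eps_pos] by auto

lemma kernel_space: "x \<in> M \<Longrightarrow> space (K (eps n) x) = M"
  using sets_eq_imp_space_eq[OF kernel_sets] by (simp add: space_restrict_space)

lemma kernel_measurable: "\<Gamma> \<in> sets Borel_M \<Longrightarrow> (\<lambda>x. measure (K (eps n) x) \<Gamma>) \<in> borel_measurable (\<mu>s n)"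
  using K_meas[OF eps_pos] by (simp add: measurable_cong_sets[OF mus_sets refl])

lemma kernel_unit: "x \<in> space (\<mu>s n) \<Longrightarrow> 0 \<le> measure (K (eps n) x) \<Gamma> \<and> measure (K (eps n) x) \<Gamma> \<le> 1"
  using prob_space.prob_le_1[OF kernel_prob] mus_space by auto

lemma M0_sets: "M0 \<in> sets Borel_M" and M1_sets: "M1 \<in> sets Borel_M"
  using M0_sub M0_closed M1_eq by (auto simp: sets_restrict_space Diff_eq intro!: image_eqI[of _ _ M0])

lemma M1_openin: "openin (top_of_set M) M1"
  using M0_closed M1_eq by (auto simp: Diff_eq openin_open_Int open_Compl)

lemma measure_compl_M0:
  assumes "prob_space \<nu>" "sets \<nu> = sets Borel_M"
  shows "measure \<nu> M1 = 1 - measure \<nu> M0"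
proof -
  have "space \<nu> = M" using sets_eq_imp_space_eq[OF assms(2)] by (simp add: space_restrict_space)
  then show ?thesis
    using prob_space.prob_compl[OF assms(1), of M0] M0_sets assms(2) M1_eq by simp
qed

lemma lam_eq_integral: "(LINT x:M1|\<mu>s n. measure (K (eps n) x) M1) = lam n"
  using qsd_eq[OF M1_sets order_refl, of n] mus_M1 by simp

text \<open>A QSD with eigenvalue below 1 forces a nonempty absorbing part: if \<open>M1 = M\<close> the
  kernel never leaves M1 and the eigenvalue would be 1.\<close>
lemma M0_nonempty: "M0 \<noteq> {}"
proof
  assume "M0 = {}"
  then have "1 * measure (\<mu>s 0) M1 \<le> (LINT x:M1|\<mu>s 0. measure (K (eps 0) x) M1)"
    using M1_sets M1_eq prob_space.prob_space[OF kernel_prob] kernel_space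
    by (intro set_integral_lower[OF prob_space.finite_measure[OF mus_prob] kernel_measurable kernel_unit])
      (auto simp: mus_sets)
  then show False using lam_eq_integral[of 0] mus_M1[of 0] lam_less_1[of 0] by simp
qed

lemma beta_ge:
  "x \<in> M \<Longrightarrow> measure (K (eps n) x) (M - nbhd M \<delta> {F x}) \<le> beta M F K \<delta> (eps n)"
  unfolding beta_def using prob_space.prob_le_1[OF kernel_prob]
  by (intro cSUP_upper bdd_aboveI[where M=1]) auto

lemma beta_nonneg: "0 \<le> beta M F K \<delta> (eps n)"
proof -
  obtain x where "x \<in> M" using M0_nonempty M0_sub by auto
  then show ?thesis using beta_ge[of x n \<delta>] measure_nonneg order_trans by blast
qed

lemma beta_tendsto: "\<delta> > 0 \<Longrightarrow> (\<lambda>n. beta M F K \<delta> (eps n)) \<longlonglongrightarrow> 0"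
  using filterlim_compose[OF SH1 filterlim_at_withinI[OF eps_lim]] eps_pos by (simp add: o_def)

lemma kernel_nbhd_lower:
  assumes x: "x \<in> M" and \<Gamma>: "\<Gamma> \<in> sets Borel_M" "nbhd M \<delta> {F x} \<subseteq> \<Gamma>"
  shows "1 - beta M F K \<delta> (eps n) \<le> measure (K (eps n) x) \<Gamma>"
proof -
  interpret Kx: prob_space "K (eps n) x" by (rule kernel_prob[OF x])
  have nbhd_sets: "nbhd M \<delta> {F x} \<in> sets Borel_M"
  proof -
    have "nbhd M \<delta> {F x} = M \<inter> ball (F x) \<delta>" by (auto simp: nbhd_def dist_commute)
    then show ?thesis by (auto simp: sets_restrict_space)
  qed
  have "measure (K (eps n) x) (M - nbhd M \<delta> {F x}) = 1 - measure (K (eps n) x) (nbhd M \<delta> {F x})"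
    using Kx.prob_compl[of "nbhd M \<delta> {F x}"] nbhd_sets kernel_sets[OF x] kernel_space[OF x] by simp
  moreover have "measure (K (eps n) x) (nbhd M \<delta> {F x}) \<le> measure (K (eps n) x) \<Gamma>"
    using Kx.finite_measure_mono[OF \<Gamma>(2)] \<Gamma>(1) kernel_sets[OF x] by simp
  ultimately show ?thesis using beta_ge[OF x, of n \<delta>] by linarith
qed

lemma mu_openin_lower:
  "openin (top_of_set M) G \<Longrightarrow> e > 0 \<Longrightarrow>
    eventually (\<lambda>n. measure \<mu> G - e < measure (\<mu>s n) G) sequentially"
  by (rule weak_conv_openin_lower[OF M_closed weak mus_prob mus_sets mu_prob mu_sets])

lemma qsd_escape_bound:
  assumes S: "S \<in> sets Borel_M" "S \<subseteq> \<Gamma>" and \<Gamma>: "\<Gamma> \<in> sets Borel_M" "\<Gamma> \<subseteq> M1"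
    and nb: "\<And>x. x \<in> S \<Longrightarrow> nbhd M \<delta> {F x} \<subseteq> \<Gamma>"
  shows "(1 - beta M F K \<delta> (eps n)) * measure (\<mu>s n) S \<le> lam n * measure (\<mu>s n) \<Gamma>"
proof -
  have "S \<subseteq> M" using S \<Gamma> M1_eq by auto
  then have "(1 - beta M F K \<delta> (eps n)) * measure (\<mu>s n) S \<le> (LINT x:M1|\<mu>s n. measure (K (eps n) x) \<Gamma>)"
    using S \<Gamma> M1_sets kernel_nbhd_lower[OF _ \<Gamma>(1) nb]
    by (intro set_integral_lower[OF prob_space.finite_measure[OF mus_prob] kernel_measurable kernel_unit])
      (auto simp: mus_sets)
  then show ?thesis using qsd_eq[OF \<Gamma>] by simp
qed


lemma lam_ge_escape:
  assumes r: "r \<ge> 0"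
  shows "measure (\<mu>s n) (escape_set M F M0 r) - beta M F K r (eps n) \<le> lam n"
proof -
  define E where "E = escape_set M F M0 r"
  define b where "b = beta M F K r (eps n)"
  have "E \<subseteq> M1" using escape_set_subset[OF F_M0 r] M1_eq by (simp add: E_def)
  moreover have "E \<in> sets Borel_M"
    unfolding E_def by (rule openin_sets_restrict_borel[OF escape_set_openin[OF F_cont]])
  moreover have "nbhd M r {F x} \<subseteq> M1" if "x \<in> E" for x
    using escape_set_nbhd[OF that[unfolded E_def]] M1_eq by simp
  ultimately have "(1 - b) * measure (\<mu>s n) E \<le> lam n * measure (\<mu>s n) M1"
    unfolding b_def using M1_sets by (intro qsd_escape_bound) auto
  moreover have "b * measure (\<mu>s n) E \<le> b"
    using beta_nonneg prob_space.prob_le_1[OF mus_prob] by (simp add: b_def mult_left_le)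
  ultimately show ?thesis using mus_M1[of n] by (simp add: E_def b_def algebra_simps)
qed

text \<open>The escape sets exhaust M1, so their \<mu>-mass approximates \<open>\<mu> M1\<close> from below.\<close>
lemma mu_escape_approx:
  assumes t: "t < measure \<mu> M1"
  shows "\<exists>r>0. t < measure \<mu> (escape_set M F M0 r)"
proof -
  interpret mu: prob_space \<mu> by (rule mu_prob)
  define G where "G k = escape_set M F M0 (1 / Suc k)" for k
  have G_sets: "range G \<subseteq> sets \<mu>"
    using openin_sets_restrict_borel[OF escape_set_openin[OF F_cont]] by (auto simp: G_def mu_sets)
  have "incseq G"
  proof (rule incseq_SucI)
    fix k
    have "1 / real (Suc (Suc k)) \<le> 1 / real (Suc k)" by (simp add: frac_le)
    then show "G k \<subseteq> G (Suc k)" by (auto simp: G_def escape_set_def)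
  qed
  then have lim: "(\<lambda>k. measure \<mu> (G k)) \<longlonglongrightarrow> measure \<mu> (\<Union>k. G k)"
    by (rule mu.finite_Lim_measure_incseq[OF G_sets])
  have "measure \<mu> M1 \<le> measure \<mu> (\<Union>k. G k)"
    using escape_set_exhaust[OF M0_closed M0_nonempty] F_M1 M1_eq G_sets
    by (intro mu.finite_measure_mono) (auto simp: G_def)
  then have "eventually (\<lambda>k. t < measure \<mu> (G k)) sequentially"
    using t by (intro order_tendstoD(1)[OF lim]) auto
  then obtain k where "t < measure \<mu> (G k)" by (auto simp: eventually_sequentially)
  then show ?thesis by (intro exI[of _ "1 / Suc k"]) (simp add: G_def)
qed

theorem liminf_lam_ge: "ereal (measure \<mu> M1) \<le> liminf (\<lambda>n. ereal (lam n))"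
  unfolding le_Liminf_iff
proof (intro allI impI)
  fix y :: ereal assume y: "y < ereal (measure \<mu> M1)"
  show "eventually (\<lambda>n. y < ereal (lam n)) sequentially"
  proof (cases y)
    case (real t)
    obtain r where r: "r > 0" "t < measure \<mu> (escape_set M F M0 r)"
      using mu_escape_approx y real by auto
    define g where "g = measure \<mu> (escape_set M F M0 r) - t"
    have g: "g > 0" using r by (simp add: g_def)
    have "eventually (\<lambda>n. measure \<mu> (escape_set M F M0 r) - g/2 < measure (\<mu>s n) (escape_set M F M0 r)) sequentially"
      using g by (intro mu_openin_lower escape_set_openin[OF F_cont]) simp
    moreover have "eventually (\<lambda>n. beta M F K r (eps n) < g/2) sequentially"
      using g by (intro order_tendstoD(2)[OF beta_tendsto[OF r(1)]]) simp
    ultimately show ?thesis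
    proof eventually_elim
      case (elim n)
      then have "t < lam n" using lam_ge_escape[OF less_imp_le[OF r(1)], of n] g_def by linarith
      then show ?case using real by simp
    qed
  qed (use y in auto)
qed

corollary lam_tendsto_1: "measure \<mu> M1 = 1 \<Longrightarrow> lam \<longlonglongrightarrow> 1"
proof (rule order_tendstoI)
  fix a :: real assume "measure \<mu> M1 = 1" "a < 1"
  then have "ereal a < ereal (measure \<mu> M1)" by simp
  then have "eventually (\<lambda>n. ereal a < ereal (lam n)) sequentially"
    using liminf_lam_ge unfolding le_Liminf_iff by blast
  then show "eventually (\<lambda>n. a < lam n) sequentially" by simp
next
  fix a :: real assume "1 < a"
  then show "eventually (\<lambda>n. lam n < a) sequentially"
    using lam_less_1 less_trans by (intro always_eventually) blast
qed

corollary lam_tendsto_0: "lam \<longlonglongrightarrow> 0 \<Longrightarrow> measure \<mu> M0 = 1"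
proof -
  assume "lam \<longlonglongrightarrow> 0"
  then have "liminf (\<lambda>n. ereal (lam n)) = ereal 0"
    by (intro lim_imp_Liminf) simp_all
  then have "measure \<mu> M1 \<le> 0" using liminf_lam_ge by simp
  then show ?thesis
    using measure_compl_M0[OF mu_prob mu_sets] prob_space.prob_le_1[OF mu_prob, of M0] by linarith
qed

theorem attractor_lam_lower:
  assumes att: "attractor M F A" and AM1: "A \<subseteq> M1"
    and pos: "\<And>n U. openin (top_of_set M) U \<Longrightarrow> A \<subseteq> U \<Longrightarrow> measure (\<mu>s n) U > 0"
  shows "\<exists>\<delta>>0. \<forall>n. 1 - beta M F K \<delta> (eps n) \<le> lam n"
proof -
  obtain \<eta> W where \<eta>: "\<eta> > 0" and W: "openin (top_of_set M) W" "A \<subseteq> W" "W \<subseteq> M1"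
    and trap: "\<forall>x\<in>W. \<forall>y\<in>M. dist y (F x) < \<eta> \<longrightarrow> y \<in> W"
    using attractor_trapping_region[OF M_closed F_cont F_maps M1_openin F_M1 att AM1] by blast
  have "1 - beta M F K \<eta> (eps n) \<le> lam n" for n
  proof -
    have "nbhd M \<eta> {F x} \<subseteq> W" if "x \<in> W" for x
      using trap that by (auto simp: nbhd_def)
    then have "(1 - beta M F K \<eta> (eps n)) * measure (\<mu>s n) W \<le> lam n * measure (\<mu>s n) W"
      using openin_sets_restrict_borel[OF W(1)] W(3) by (intro qsd_escape_bound) auto
    then show ?thesis using pos[OF W(1,2)] by (simp add: mult_le_cancel_right)
  qed
  then show ?thesis using \<eta> by blast
qed

lemma qsd_absorption_bound:
  assumes V: "V \<in> sets Borel_M" and c: "0 \<le> c" "\<And>x. x \<in> V \<Longrightarrow> c \<le> measure (K (eps n) x) M0"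
  shows "c * measure (\<mu>s n) V \<le> 1 - lam n"
proof -
  interpret pn: prob_space "\<mu>s n" by (rule mus_prob)
  have VM1: "V \<inter> M1 \<in> sets (\<mu>s n)" using V M1_sets by (auto simp: mus_sets)
  have V_sub: "V \<subseteq> M" using sets.sets_into_space[OF V] by (simp add: space_restrict_space)
  have "measure (K (eps n) x) M1 \<le> 1 - c" if "x \<in> V \<inter> M1" for x
    using c(2)[of x] that V_sub measure_compl_M0[OF kernel_prob kernel_sets] by auto
  then have "lam n \<le> measure (\<mu>s n) M1 - (1 - (1 - c)) * measure (\<mu>s n) (V \<inter> M1)"
    unfolding lam_eq_integral[symmetric] using M1_sets VM1
    by (intro set_integral_upper[OF pn.finite_measure kernel_measurable kernel_unit])
      (auto simp: mus_sets)
  then have "c * measure (\<mu>s n) (V \<inter> M1) \<le> 1 - lam n" using mus_M1 by simp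
  moreover have "measure (\<mu>s n) V \<le> measure (\<mu>s n) (V \<inter> M1)"
  proof -
    have "measure (\<mu>s n) V \<le> measure (\<mu>s n) ((V \<inter> M1) \<union> M0)"
      using V_sub M1_eq VM1 M0_sets by (intro pn.finite_measure_mono) (auto simp: mus_sets)
    also have "\<dots> \<le> measure (\<mu>s n) (V \<inter> M1) + measure (\<mu>s n) M0"
      using VM1 M0_sets by (intro measure_Un_le) (auto simp: mus_sets)
    finally show ?thesis using measure_compl_M0[OF mus_prob mus_sets] mus_M1[of n] by simp
  qed
  ultimately show ?thesis using c(1) mult_left_mono order_trans by blast
qed

theorem absorbing_nbhd_null:
  assumes lam_lower: "\<forall>n. 1 - beta M F K \<delta> (eps n) \<le> lam n"
    and V0: "openin (top_of_set M) V0"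
    and I_pos: "eventually (\<lambda>n. (INF x\<in>V0. measure (K (eps n) x) M0) > 0) sequentially"
    and ratio: "(\<lambda>n. beta M F K \<delta> (eps n) / (INF x\<in>V0. measure (K (eps n) x) M0)) \<longlonglongrightarrow> 0"
  shows "measure \<mu> V0 = 0"
proof -
  define I where "I n = (INF x\<in>V0. measure (K (eps n) x) M0)" for n
  have bound: "measure (\<mu>s n) V0 \<le> beta M F K \<delta> (eps n) / I n" if "I n > 0" for n
  proof -
    have "I n \<le> measure (K (eps n) x) M0" if "x \<in> V0" for x
      unfolding I_def using that by (intro cINF_lower bdd_belowI[where m=0]) auto
    then have "I n * measure (\<mu>s n) V0 \<le> 1 - lam n"
      using openin_sets_restrict_borel[OF V0] \<open>I n > 0\<close> by (intro qsd_absorption_bound) auto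
    then have "I n * measure (\<mu>s n) V0 \<le> beta M F K \<delta> (eps n)"
      using lam_lower[rule_format, of n] by linarith
    then show ?thesis using \<open>I n > 0\<close> by (simp add: pos_le_divide_eq mult.commute)
  qed
  have "measure \<mu> V0 < e" if e: "e > 0" for e
  proof -
    have "eventually (\<lambda>n. measure \<mu> V0 - e/2 < measure (\<mu>s n) V0 \<and>
        beta M F K \<delta> (eps n) / I n < e/2 \<and> I n > 0) sequentially"
      using mu_openin_lower[OF V0, of "e/2"] order_tendstoD(2)[OF ratio[folded I_def], of "e/2"]
        I_pos[folded I_def] e
      by (intro eventually_conj) auto
    then obtain n where "measure \<mu> V0 - e/2 < measure (\<mu>s n) V0"
        "beta M F K \<delta> (eps n) / I n < e/2" "I n > 0"
      by (auto simp: eventually_sequentially)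
    then show ?thesis using bound[of n] by linarith
  qed
  from this[of "measure \<mu> V0"] show ?thesis using measure_nonneg[of \<mu> V0] by linarith
qed

end

theorem mainTheorem7:
  fixes M M0 M1 :: "'a::euclidean_space set"
    and F :: "'a \<Rightarrow> 'a"
    and K :: "real \<Rightarrow> 'a \<Rightarrow> 'a measure"
    and eps lam :: "nat \<Rightarrow> real"
    and \<mu>s :: "nat \<Rightarrow> 'a measure" and \<mu> :: "'a measure"
  assumes M_closed: "closed M"
    and F_cont: "continuous_on M F" and F_maps: "F ` M \<subseteq> M" and F_bdd: "bounded (F ` M)"
    and K_prob: "\<And>\<epsilon> x. \<epsilon> > 0 \<Longrightarrow> x \<in> M \<Longrightarrow>
                    prob_space (K \<epsilon> x) \<and> sets (K \<epsilon> x) = sets (restrict_space borel M)"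
    and K_meas: "\<And>\<epsilon> \<Gamma>. \<epsilon> > 0 \<Longrightarrow> \<Gamma> \<in> sets (restrict_space borel M) \<Longrightarrow>
                    (\<lambda>x. measure (K \<epsilon> x) \<Gamma>) \<in> borel_measurable (restrict_space borel M)"
    and SH1: "\<And>\<delta>. \<delta> > 0 \<Longrightarrow> ((\<lambda>\<epsilon>. beta M F K \<delta> \<epsilon>) \<longlongrightarrow> 0) (at_right 0)"
    and SH2_M0: "M0 \<subseteq> M" "closed M0" and SH2_M1: "M1 = M - M0"
    and SH2_inv0: "F ` M0 \<subseteq> M0" and SH2_inv1: "F ` M1 \<subseteq> M1"
    and SH2_abs: "\<And>\<epsilon> x. \<epsilon> > 0 \<Longrightarrow> x \<in> M0 \<Longrightarrow> measure (K \<epsilon> x) M1 = 0"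
    and eps_pos: "\<And>n. eps n > 0" and eps_dec: "decseq eps" and eps_lim: "eps \<longlonglongrightarrow> 0"
    and qsd: "\<And>n. QSD M M1 (K (eps n)) (\<mu>s n) (lam n)"
    and mu_prob: "prob_space \<mu>" and mu_sets: "sets \<mu> = sets (restrict_space borel M)"
    and weak: "weak_conv_on M \<mu>s \<mu>"
  shows
    "(liminf (\<lambda>n. ereal (lam n)) \<ge> ereal (measure \<mu> M1))
     \<and> (measure \<mu> M1 = 1 \<longrightarrow> lam \<longlonglongrightarrow> 1)
     \<and> (lam \<longlonglongrightarrow> 0 \<longrightarrow> measure \<mu> M0 = 1)
     \<and> (\<forall>A. attractor M F A \<and> A \<subseteq> M1 \<and>
            (\<forall>n U. openin (top_of_set M) U \<and> A \<subseteq> U \<longrightarrow> measure (\<mu>s n) U > 0)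
          \<longrightarrow> (\<exists>\<delta>>0. \<forall>n. lam n \<ge> 1 - beta M F K \<delta> (eps n))
            \<and> (\<forall>\<delta>>0. (\<forall>n. lam n \<ge> 1 - beta M F K \<delta> (eps n)) \<longrightarrow>
                 (\<forall>V0. openin (top_of_set M) V0 \<and> M0 \<subseteq> V0
                    \<and> eventually (\<lambda>n. (INF x\<in>V0. measure (K (eps n) x) M0) > 0) sequentially
                    \<and> (\<lambda>n. beta M F K \<delta> (eps n) / (INF x\<in>V0. measure (K (eps n) x) M0)) \<longlonglongrightarrow> 0
                  \<longrightarrow> measure \<mu> V0 = 0)))"
proof -
  interpret qsd_limit M M0 M1 F K eps lam \<mu>s \<mu>
    by (rule qsd_limit.intro) (fact assms)+
  show ?thesis
  proof (intro conjI impI allI)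
    show "ereal (measure \<mu> M1) \<le> liminf (\<lambda>n. ereal (lam n))" by (rule liminf_lam_ge)
  next
    show "lam \<longlonglongrightarrow> 1" if "measure \<mu> M1 = 1" using that by (rule lam_tendsto_1)
  next
    show "measure \<mu> M0 = 1" if "lam \<longlonglongrightarrow> 0" using that by (rule lam_tendsto_0)
  next
    fix A assume "attractor M F A \<and> A \<subseteq> M1 \<and>
        (\<forall>n U. openin (top_of_set M) U \<and> A \<subseteq> U \<longrightarrow> measure (\<mu>s n) U > 0)"
    then show "\<exists>\<delta>>0. \<forall>n. lam n \<ge> 1 - beta M F K \<delta> (eps n)"
      by (intro attractor_lam_lower) auto
  next
    fix \<delta> V0 assume "\<forall>n. lam n \<ge> 1 - beta M F K \<delta> (eps n)"
      and "openin (top_of_set M) V0 \<and> M0 \<subseteq> V0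
        \<and> eventually (\<lambda>n. (INF x\<in>V0. measure (K (eps n) x) M0) > 0) sequentially
        \<and> (\<lambda>n. beta M F K \<delta> (eps n) / (INF x\<in>V0. measure (K (eps n) x) M0)) \<longlonglongrightarrow> 0"
    then show "measure \<mu> V0 = 0" by (intro absorbing_nbhd_null) auto
  qed
qed

end
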